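(* For every $j\in\tfrac12\mathbb{N}^+$, \[ K^{(j+\frac12)}(t)=\mathcal{F}^{(j+\frac12)}\star K^{(\frac12)}_{1}(q^{j}t)\star\widehat R^{(\frac12,j)}\star K^{(j)}_{2}(q^{-1/2}t)\star\mathcal{E}^{(j+\frac12)}, \] where $K^{(\frac12)}_1(q^jt)=K^{(\frac12)}(q^jt)\otimes I_{2j+1}$ and $K^{(j)}_2(q^{-1/2}t)=I_2\otimes K^{(j)}(q^{-1/2}t)$.
   Context: $\mathbb{F}$ is a field of characteristic zero in which every element has a square root; $q\in\mathbb{F}$ nonzero, not a root of unity, with fixed square root $q^{1/2}$ ($q^{k/2}:=(q^{1/2})^k$); other $(\cdot)^{1/2}$ denote fixed square roots in $\mathbb{F}$. $[n]_q=\frac{q^n-q^{-n}}{q-q^{-1}}$, $[n]_q^!=[n]_q\cdots[1]_q$, $[0]_q^!=1$. $\tfrac12\mathbb{N}^+=\{\tfrac12,1,\tfrac32,\dots\}$. $I_n$ identity, $\otimes$ Kronecker product, $t$ an indeterminate. For $j\in\tfrac12\mathbb{N}^+$: $\mathcal{E}^{(j+\frac12)}$ is the $(4j+2)\times(2j+2)$ matrix with only nonzero entries $\mathcal{E}_{(a,a)}=\big(\frac{[2j+2-a]_q}{[2j+1]_q}\big)^{1/2}$, $\mathcal{E}_{(a+2j+1,a+1)}=\big(\frac{[a]_q}{[2j+1]_q}\big)^{1/2}$ ($1\le a\le 2j+1$); $\mathcal{F}^{(j+\frac12)}$ is the $(2j+2)\times(4j+2)$ matrix with only nonzero entries $\mathcal{F}_{(a,a)}=\frac{([2j+2-a]_q[2j+1]_q)^{1/2}}{[2j+2-a]_q+[a-1]_q}$,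 $\mathcal{F}_{(a+1,a+2j+1)}=\frac{([a]_q[2j+1]_q)^{1/2}}{[2j+1-a]_q+[a]_q}$ ($1\le a\le 2j+1$). $\widehat R^{(\frac12,j)}=q^{2\,\mathrm{diag}(\frac12,-\frac12)\otimes\mathrm{diag}(j,j-1,\dots,-j)}$ (diagonal). $\mathbb{V}$ is the free algebra on letters $x,y$ (basis: words; $\mathbf 1$ empty word) with $q$-shuffle product $\star$: bilinear, $\mathbf 1\star v=v\star\mathbf 1=v$, and for nonempty words $u=u_1\cdots u_r,v=v_1\cdots v_s$, $u\star v=u_1((u_2\cdots u_r)\star v)+v_1(u\star(v_2\cdots v_s))q^{\langle v_1,u_1\rangle+\dots+\langle v_1,u_r\rangle}$ with $\langle x,x\rangle=\langle y,y\rangle=2$, $\langle x,y\rangle=\langle y,x\rangle=-2$. For matrices with entries in $\mathbb{V}$ or series over $\mathbb{V}$ (scalars from $\mathbb{F}$ regarded as multiples of $\mathbf 1$), $A\star B$ is the matrix product with entries multiplied by $\star$. $\bar x=1,\bar y=-1$; a word $a_1\cdots a_n$ is Catalan if $\bar a_1+\dots+\bar a_i\ge0$ ($i<n$) and total $0$; $\mathrm{Cat}_n$ = Catalan words of length $2n$. $\Delta^{(m)}_n=\sum_{a_1\cdots a_{2n}\in\mathrm{Cat}_n}\prod_{i=1}^{2n}[\bar a_1+\dots+\bar a_{i-1}+m(\bar a_i+1)/2]_q\,a_1\cdots a_{2n}$, $\Delta^{(m)}(t)=\sum_n\Delta^{(m)}_nt^n$. Deletion: $x^{-1}w$ deletes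 a leading $x$ (else $0$; $x^{-1}\mathbf 1=0$), $y^{-1}w$, $wx^{-1}$, $wy^{-1}$ analogously; extended linearly/coefficientwise; exponent $-k$ is $k$-fold application, $0$ identity. $K^{(j)}(t)$ is the $(2j+1)\times(2j+1)$ matrix with $K^{(j)}_{(a,b)}(t)=\varphi(a,b,j)t^{a-b-2j}x^{1-b}\Delta^{(-2j)}(-t^2)y^{a-2j-1}$, $\varphi(a,b,j)=q^{\rho(a,b,j)}([2j]_q^!)^{-1}\big(\frac{[a-1]_q^![2j+1-b]_q^!}{[b-1]_q^![2j+1-a]_q^!}\big)^{1/2}$, $\rho(a,b,j)=(a^2+b^2+6j^2+4ab-6aj-6bj-6a-6b+13j+6)/2$. *)

theory Defs
  imports Complex_Main
begin

datatype letter = Lx | Ly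

(* An element of V is given by its coefficient function on words.  We allow
   arbitrary coefficient functions (formal series over words); the q-shuffle
   product is still well defined coefficientwise (only finitely many pairs of
   words contribute to a given word), and it restricts to the product of V on
   finitely supported functions. *)
type_synonym 'a vv = "letter list \<Rightarrow> 'a"

definition pairing :: "letter \<Rightarrow> letter \<Rightarrow> int" where
  "pairing a b = (if a = b then 2 else -2)"

(* shw q u v = u star v for words u v, as a coefficient function *)
fun shw :: "'a::field \<Rightarrow> letter list \<Rightarrow> letter list \<Rightarrow> 'a vv" where
  "shw q [] v = (\<lambda>w. if w = v then 1 else 0)"
| "shw q (a # u) [] = (\<lambda>w. if w = a # u then 1 else 0)"
| "shw q (a # u) (b # v) = (\<lambda>w. case w of [] \<Rightarrow> 0
     | c # w' \<Rightarrow> (if c = a then shw q u (b # v) w' else 0)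
                 + (if c = b then q powi (\<Sum>l\<leftarrow>a # u. pairing b l) * shw q (a # u) v w' else 0))"

definition vstar :: "'a::field \<Rightarrow> 'a vv \<Rightarrow> 'a vv \<Rightarrow> 'a vv" where
  "vstar q f g = (\<lambda>w. \<Sum>p\<in>{(u, v). length u + length v = length w}.
      f (fst p) * g (snd p) * shw q (fst p) (snd p) w)"

(* coefficient of t^k *)
type_synonym 'a ls = "int \<Rightarrow> 'a vv"

(* product of Laurent series (Cauchy product with star); the index set is finite
   whenever both supports are bounded below, which is the case for all series below *)
definition lsmul :: "'a::field \<Rightarrow> 'a ls \<Rightarrow> 'a ls \<Rightarrow> 'a ls" where
  "lsmul q f g = (\<lambda>k w. \<Sum>i\<in>{i. f i \<noteq> (\<lambda>_. 0) \<and> g (k - i) \<noteq> (\<lambda>_. 0)}.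
      vstar q (f i) (g (k - i)) w)"

definition lsconst :: "'a::field \<Rightarrow> 'a ls" where
  "lsconst c = (\<lambda>k w. if k = 0 \<and> w = [] then c else 0)"

definition lsscale :: "'a::field \<Rightarrow> 'a ls \<Rightarrow> 'a ls" where
  "lsscale c f = (\<lambda>k w. c * f k w)"

definition tshift :: "int \<Rightarrow> 'a::field ls \<Rightarrow> 'a ls" where
  "tshift d f = (\<lambda>k. f (k - d))"

definition tsubst_scale :: "'a::field \<Rightarrow> 'a ls \<Rightarrow> 'a ls" where
  "tsubst_scale c f = (\<lambda>k w. c powi k * f k w)"

(* f(t) to f(-t^2) *)
definition tsubst_negsq :: "'a::field ls \<Rightarrow> 'a ls" where
  "tsubst_negsq f = (\<lambda>k w. if even k then (-1) powi (k div 2) * f (k div 2) w else 0)"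

(* deletions: x^{-1} f  and  f y^{-1}, coefficientwise *)
definition del_x_left :: "'a::field ls \<Rightarrow> 'a ls" where
  "del_x_left f = (\<lambda>k w. f k (Lx # w))"

definition del_y_right :: "'a::field ls \<Rightarrow> 'a ls" where
  "del_y_right f = (\<lambda>k w. f k (w @ [Ly]))"

(* matrices are functions on 1-based indices; dimensions are passed explicitly *)
type_synonym 'a lsmat = "nat \<Rightarrow> nat \<Rightarrow> 'a ls"

definition mmul :: "'a::field \<Rightarrow> nat \<Rightarrow> 'a lsmat \<Rightarrow> 'a lsmat \<Rightarrow> 'a lsmat" where
  "mmul q n A B = (\<lambda>i k d w. \<Sum>l\<in>{1..n}. lsmul q (A i l) (B l k) d w)"

definition idm :: "'a::field lsmat" where
  "idm = (\<lambda>i k. if i = k then lsconst 1 else (\<lambda>_ _. 0))"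

(* Kronecker product A (x) B where B has size rb x cb *)
definition kron :: "'a::field \<Rightarrow> nat \<Rightarrow> nat \<Rightarrow> 'a lsmat \<Rightarrow> 'a lsmat \<Rightarrow> 'a lsmat" where
  "kron q rb cb A B = (\<lambda>i k. lsmul q (A ((i - 1) div rb + 1) ((k - 1) div cb + 1))
                                    (B ((i - 1) mod rb + 1) ((k - 1) mod cb + 1)))"

definition constmat :: "(nat \<Rightarrow> nat \<Rightarrow> 'a::field) \<Rightarrow> 'a lsmat" where
  "constmat M = (\<lambda>i k. lsconst (M i k))"

definition qint :: "'a::field \<Rightarrow> int \<Rightarrow> 'a" where
  "qint q n = (q powi n - q powi (-n)) / (q - inverse q)"

definition qfact :: "'a::field \<Rightarrow> nat \<Rightarrow> 'a" where
  "qfact q n = (\<Prod>k\<in>{1..n}. qint q (int k))"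

(* ([n]_q^!)^{1/2} := [1]_q^{1/2} ... [n]_q^{1/2} with the fixed square roots sr *)
definition sqfact :: "('a::field \<Rightarrow> 'a) \<Rightarrow> 'a \<Rightarrow> nat \<Rightarrow> 'a" where
  "sqfact sr q n = (\<Prod>k\<in>{1..n}. sr (qint q (int k)))"

(* q^r for r in (1/2)Z, where h = q^{1/2}:  q^{k/2} = h^k *)
definition qpow :: "'a::field \<Rightarrow> rat \<Rightarrow> 'a" where
  "qpow h r = h powi \<lfloor>2 * r\<rfloor>"

definition bar :: "letter \<Rightarrow> int" where
  "bar l = (if l = Lx then 1 else -1)"

definition catalan :: "letter list \<Rightarrow> bool" where
  "catalan w \<longleftrightarrow> (\<forall>i\<le>length w. 0 \<le> sum_list (map bar (take i w)))
                  \<and> sum_list (map bar w) = 0"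

definition Delta_n :: "'a::field \<Rightarrow> int \<Rightarrow> nat \<Rightarrow> 'a vv" where
  "Delta_n q m n = (\<lambda>w. if length w = 2 * n \<and> catalan w
      then (\<Prod>i<2 * n. qint q (sum_list (map bar (take i w)) + m * (bar (w ! i) + 1) div 2))
      else 0)"

definition DeltaS :: "'a::field \<Rightarrow> int \<Rightarrow> 'a ls" where
  "DeltaS q m = (\<lambda>k w. if 0 \<le> k then Delta_n q m (nat k) w else 0)"

section \<open>The matrices K^{(j)}, E, F, R; throughout m = 2j\<close>

definition rho :: "nat \<Rightarrow> nat \<Rightarrow> rat \<Rightarrow> rat" where
  "rho a b j = (of_nat a ^ 2 + of_nat b ^ 2 + 6 * j ^ 2 + 4 * of_nat a * of_nat b
                - 6 * of_nat a * j - 6 * of_nat b * j - 6 * of_nat a - 6 * of_nat b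
                + 13 * j + 6) / 2"

definition phi :: "('a::field \<Rightarrow> 'a) \<Rightarrow> 'a \<Rightarrow> 'a \<Rightarrow> nat \<Rightarrow> nat \<Rightarrow> nat \<Rightarrow> 'a" where
  "phi sr q h a b m = qpow h (rho a b (of_nat m / 2)) * inverse (qfact q m)
     * ((sqfact sr q (a - 1) * sqfact sr q (m + 1 - b))
        / (sqfact sr q (b - 1) * sqfact sr q (m + 1 - a)))"

(* K^{(j)}(t), j = m/2, a (m+1) x (m+1) matrix *)
definition Kmat :: "('a::field \<Rightarrow> 'a) \<Rightarrow> 'a \<Rightarrow> 'a \<Rightarrow> nat \<Rightarrow> 'a lsmat" where
  "Kmat sr q h m = (\<lambda>a b. lsscale (phi sr q h a b m)
      (tshift (int a - int b - int m)
        ((del_x_left ^^ (b - 1)) ((del_y_right ^^ (m + 1 - a))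
           (tsubst_negsq (DeltaS q (- int m)))))))"

(* E^{(j+1/2)}, a (2m+2) x (m+2) matrix *)
definition Emat :: "('a::field \<Rightarrow> 'a) \<Rightarrow> 'a \<Rightarrow> nat \<Rightarrow> nat \<Rightarrow> nat \<Rightarrow> 'a" where
  "Emat sr q m = (\<lambda>r c.
     if 1 \<le> r \<and> r \<le> m + 1 \<and> c = r
       then sr (qint q (int m + 2 - int r)) / sr (qint q (int m + 1))
     else if m + 2 \<le> r \<and> r \<le> 2 * m + 2 \<and> c = r - m
       then sr (qint q (int r - int m - 1)) / sr (qint q (int m + 1))
     else 0)"

(* F^{(j+1/2)}, a (m+2) x (2m+2) matrix *)
definition Fmat :: "('a::field \<Rightarrow> 'a) \<Rightarrow> 'a \<Rightarrow> nat \<Rightarrow> nat \<Rightarrow> nat \<Rightarrow> 'a" where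
  "Fmat sr q m = (\<lambda>r c.
     if 1 \<le> c \<and> c \<le> m + 1 \<and> r = c
       then sr (qint q (int m + 2 - int c)) * sr (qint q (int m + 1))
            / (qint q (int m + 2 - int c) + qint q (int c - 1))
     else if m + 2 \<le> c \<and> c \<le> 2 * m + 2 \<and> r = c - m
       then (let a = c - m - 1 in
             sr (qint q (int a)) * sr (qint q (int m + 1))
             / (qint q (int m + 1 - int a) + qint q (int a)))
     else 0)"

(* Rhat^{(1/2,j)} = q^{2 D}, D = diag(1/2,-1/2) (x) diag(j, j-1, ..., -j) *)
definition Dmat :: "nat \<Rightarrow> nat \<Rightarrow> rat" where
  "Dmat m r = (if r \<le> m + 1 then 1/2 else -1/2) * (of_nat m / 2 - of_nat ((r - 1) mod (m + 1)))"

definition Rmat :: "'a::field \<Rightarrow> nat \<Rightarrow> nat \<Rightarrow> nat \<Rightarrow> 'a" where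
  "Rmat h m = (\<lambda>r c. if r = c \<and> 1 \<le> r \<and> r \<le> 2 * m + 2 then qpow h (2 * Dmat m r) else 0)"

end

theory Submission
  imports Defs
begin

text \<open>
  Every entry of \<open>K^(j)(t)\<close> is homogeneous (its coefficient of \<open>t^k\<close> lives on words of length \<open>k\<close>),
  and as a function of the word the entry \<open>(a, b)\<close> is a product of one weight per letter along the
  lattice path from height \<open>b - 1\<close> to height \<open>2j + 1 - a\<close> (\<open>x\<close> steps up, \<open>y\<close> steps down): the
  \<open>q\<close>-integers that the Catalan expansion of \<open>\<Delta>^(-2j)\<close> attaches to the path telescope with
  \<open>\<phi>(a, b, j)\<close> into such step weights.

  On homogeneous series the matrix products become \<open>q\<close>-shuffle products of word functions, and the
  \<open>q\<close>-shuffle product obeys a recursion in the first letter of the word. Contracting the indices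
  against \<open>F\<close>, \<open>R\<close> and \<open>E\<close> leaves, for each of the two nonzero entries in a row of \<open>F\<close>, a fixed
  combination of two shuffles of a path of \<open>K^(1/2)\<close> with a path of \<open>K^(j)\<close>. Four identities between
  \<open>q\<close>-integers show that this combination obeys the step recursion of \<open>K^(j+1/2)\<close>, so by induction
  on the word it is a multiple of the wanted entry; the normalisation of \<open>F\<close> makes the two multiples
  add up to one.
\<close>


section \<open>The \<open>q\<close>-shuffle product letter by letter\<close>

definition word_splits :: "nat \<Rightarrow> (letter list \<times> letter list) set" where
  "word_splits n = {(u, v). length u + length v = n}"

lemma finite_word_splits: "finite (word_splits n)"
proof -
  have letters: "(UNIV :: letter set) = {Lx, Ly}"
    using letter.exhaust by auto
  have fin: "finite (UNIV :: letter set)"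
    unfolding letters by simp
  let ?W = "{xs :: letter list. set xs \<subseteq> UNIV \<and> length xs \<le> n}"
  have "word_splits n \<subseteq> ?W \<times> ?W"
    by (auto simp: word_splits_def)
  then show ?thesis
    using finite_lists_length_le[OF fin] finite_subset by blast
qed

lemma vstar_eq_sum_word_splits:
  "vstar q f g w = (\<Sum>p\<in>word_splits (length w). f (fst p) * g (snd p) * shw q (fst p) (snd p) w)"
  by (simp add: vstar_def word_splits_def)

lemma shw_Nil_right [simp]: "shw q u [] w = (if w = u then 1 else 0)"
  by (cases u) auto

lemma shw_Nil_word: "shw q u v [] = (if u = [] \<and> v = [] then 1 else 0)"
  by (cases u; cases v) auto

lemma shw_Cons_word: "shw q u v (c # w) =
   (case u of [] \<Rightarrow> 0 | a # u' \<Rightarrow> if a = c then shw q u' v w else 0)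
 + (case v of [] \<Rightarrow> 0 | b # v' \<Rightarrow> if b = c then q powi (\<Sum>l\<leftarrow>u. pairing c l) * shw q u v' w else 0)"
  by (cases u; cases v) auto

lemma sum_word_splits_Cons_fst:
  "(\<Sum>p\<in>word_splits (Suc n). case fst p of [] \<Rightarrow> 0 | a # u \<Rightarrow> if a = c then F u (snd p) else 0)
   = (\<Sum>p\<in>word_splits n. F (fst p) (snd p))"
proof -
  let ?G = "\<lambda>p. case fst p of [] \<Rightarrow> 0 | a # u \<Rightarrow> if a = c then F u (snd p) else 0"
  let ?i = "\<lambda>p. (c # fst p, snd p)"
  have "(\<Sum>p\<in>word_splits n. F (fst p) (snd p)) = sum ?G (?i ` word_splits n)"
    by (subst sum.reindex) (auto simp: inj_on_def)
  also have "\<dots> = sum ?G (word_splits (Suc n))"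
  proof (rule sum.mono_neutral_left[OF finite_word_splits])
    show "?i ` word_splits n \<subseteq> word_splits (Suc n)"
      by (auto simp: word_splits_def)
    show "\<forall>p\<in>word_splits (Suc n) - ?i ` word_splits n. ?G p = 0"
      by (auto simp: word_splits_def image_iff split: list.split)
  qed
  finally show ?thesis by simp
qed

lemma sum_word_splits_Cons_snd:
  "(\<Sum>p\<in>word_splits (Suc n). case snd p of [] \<Rightarrow> 0 | b # v \<Rightarrow> if b = c then F (fst p) v else 0)
   = (\<Sum>p\<in>word_splits n. F (fst p) (snd p))"
proof -
  have swap: "bij_betw prod.swap (word_splits k) (word_splits k)" for k
    by (rule bij_betw_byWitness[of _ prod.swap]) (auto simp: word_splits_def)
  have "(\<Sum>p\<in>word_splits (Suc n). case snd p of [] \<Rightarrow> 0 | b # v \<Rightarrow> if b = c then F (fst p) v else 0)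
      = (\<Sum>p\<in>word_splits (Suc n). case fst p of [] \<Rightarrow> 0 | b # v \<Rightarrow> if b = c then F (snd p) v else 0)"
    by (subst sum.reindex_bij_betw[OF swap, symmetric]) (auto intro!: sum.cong split: list.split)
  also have "\<dots> = (\<Sum>p\<in>word_splits n. F (snd p) (fst p))"
    by (rule sum_word_splits_Cons_fst)
  also have "\<dots> = (\<Sum>p\<in>word_splits n. F (fst p) (snd p))"
    by (subst sum.reindex_bij_betw[OF swap, symmetric]) (auto intro!: sum.cong split: list.split)
  finally show ?thesis .
qed

lemma vstar_Nil: "vstar q f g [] = f [] * g []"
  by (simp add: vstar_eq_sum_word_splits word_splits_def shw_Nil_word)

lemma vstar_Cons: "vstar q f g (c # w) = vstar q (\<lambda>u. f (c # u)) g w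
     + vstar q (\<lambda>u. q powi (\<Sum>l\<leftarrow>u. pairing c l) * f u) (\<lambda>v. g (c # v)) w"
proof -
  have "vstar q f g (c # w) =
      (\<Sum>p\<in>word_splits (Suc (length w)). case fst p of [] \<Rightarrow> 0
         | a # u \<Rightarrow> if a = c then f (c # u) * g (snd p) * shw q u (snd p) w else 0)
    + (\<Sum>p\<in>word_splits (Suc (length w)). case snd p of [] \<Rightarrow> 0
         | b # v \<Rightarrow> if b = c then q powi (\<Sum>l\<leftarrow>fst p. pairing c l) * f (fst p) * g (c # v)
                                  * shw q (fst p) v w else 0)"
    unfolding vstar_eq_sum_word_splits sum.distrib[symmetric]
    by (rule sum.cong) (auto simp: shw_Cons_word algebra_simps split: list.split)
  also have "\<dots> = vstar q (\<lambda>u. f (c # u)) g w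
     + vstar q (\<lambda>u. q powi (\<Sum>l\<leftarrow>u. pairing c l) * f u) (\<lambda>v. g (c # v)) w"
    unfolding vstar_eq_sum_word_splits
      sum_word_splits_Cons_fst[where F = "\<lambda>u v. f (c # u) * g v * shw q u v w"]
      sum_word_splits_Cons_snd[where F = "\<lambda>u v. q powi (\<Sum>l\<leftarrow>u. pairing c l) * f u * g (c # v) * shw q u v w"]
    ..
  finally show ?thesis .
qed

lemma vstar_zero_left [simp]: "vstar q (\<lambda>_. 0) g = (\<lambda>_. 0)"
  by (simp add: vstar_def)

lemma vstar_zero_right [simp]: "vstar q f (\<lambda>_. 0) = (\<lambda>_. 0)"
  by (simp add: vstar_def)

lemma vstar_scale_left: "vstar q (\<lambda>u. a * f u) g w = a * vstar q f g w"
  by (simp add: vstar_def sum_distrib_left algebra_simps)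

lemma vstar_scale_right: "vstar q f (\<lambda>v. a * g v) w = a * vstar q f g w"
  by (simp add: vstar_def sum_distrib_left algebra_simps)

lemma vstar_sum_left: "finite S \<Longrightarrow> vstar q (\<lambda>u. \<Sum>l\<in>S. F l u) g w = (\<Sum>l\<in>S. vstar q (F l) g w)"
  by (simp add: vstar_def sum_distrib_right sum.swap[of _ S])

lemma vstar_unit_left: "vstar q (\<lambda>u. if u = [] then a else 0) g = (\<lambda>w. a * g w)"
proof
  fix w
  show "vstar q (\<lambda>u. if u = [] then a else 0) g w = a * g w"
  proof (induction w arbitrary: g)
    case (Cons c w)
    have "(\<lambda>u. q powi (\<Sum>l\<leftarrow>u. pairing c l) * (if u = [] then a else 0)) = (\<lambda>u. if u = [] then a else 0)"
      by auto
    with Cons show ?case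
      by (simp add: vstar_Cons)
  qed (simp add: vstar_Nil)
qed

lemma vstar_unit_right: "vstar q f (\<lambda>v. if v = [] then a else 0) = (\<lambda>w. a * f w)"
proof
  fix w
  show "vstar q f (\<lambda>v. if v = [] then a else 0) w = a * f w"
    by (induction w arbitrary: f) (simp_all add: vstar_Nil vstar_Cons cong: if_cong)
qed


section \<open>Homogeneous series\<close>

definition homog :: "'a::field vv \<Rightarrow> 'a ls" where
  "homog f = (\<lambda>k w. if k = int (length w) then f w else 0)"

lemma lsconst_eq_homog: "lsconst c = homog (\<lambda>u. if u = [] then c else 0)"
  by (auto simp: lsconst_def homog_def fun_eq_iff)

lemma zero_eq_homog: "(\<lambda>_ _. 0) = homog (\<lambda>_. 0)"
  by (auto simp: homog_def fun_eq_iff)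

lemma constmat_eq_homog: "constmat M i k = homog (\<lambda>u. if u = [] then M i k else 0)"
  by (simp add: constmat_def lsconst_eq_homog)

lemma tsubst_scale_homog: "tsubst_scale c (homog f) = homog (\<lambda>u. c ^ length u * f u)"
  by (auto simp: tsubst_scale_def homog_def fun_eq_iff)

lemma lsmul_homog: "lsmul q (homog f) (homog g) = homog (vstar q f g)"
proof (intro ext)
  fix k w
  let ?S = "{i. homog f i \<noteq> (\<lambda>_. 0) \<and> homog g (k - i) \<noteq> (\<lambda>_. 0)}"
  let ?t = "\<lambda>p. f (fst p) * g (snd p) * shw q (fst p) (snd p) w"
  have S_sub: "?S \<subseteq> {0..k}"
  proof
    fix i assume "i \<in> ?S"
    then obtain u v where "homog f i u \<noteq> 0" "homog g (k - i) v \<noteq> 0"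
      by (auto simp: fun_eq_iff)
    then show "i \<in> {0..k}"
      by (auto simp: homog_def split: if_splits)
  qed
  have "lsmul q (homog f) (homog g) k w = (\<Sum>i\<in>{0..k}. vstar q (homog f i) (homog g (k - i)) w)"
    unfolding lsmul_def
    by (rule sum.mono_neutral_left) (use S_sub in auto)
  also have "\<dots> = (\<Sum>p\<in>word_splits (length w). \<Sum>i\<in>{0..k}.
      homog f i (fst p) * homog g (k - i) (snd p) * shw q (fst p) (snd p) w)"
    unfolding vstar_eq_sum_word_splits by (rule sum.swap)
  also have "\<dots> = (\<Sum>p\<in>word_splits (length w). if k = int (length w) then ?t p else 0)"
  proof (rule sum.cong[OF refl])
    fix p assume "p \<in> word_splits (length w)"
    then have len: "length (fst p) + length (snd p) = length w"
      by (auto simp: word_splits_def)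
    have "(\<Sum>i\<in>{0..k}. homog f i (fst p) * homog g (k - i) (snd p) * shw q (fst p) (snd p) w)
        = (\<Sum>i\<in>{0..k}. if i = int (length (fst p)) then
             (if k = int (length w) then ?t p else 0) else 0)"
      by (rule sum.cong) (use len in \<open>auto simp: homog_def\<close>)
    also have "\<dots> = (if k = int (length w) then ?t p else 0)"
      using len by auto
    finally show "(\<Sum>i\<in>{0..k}. homog f i (fst p) * homog g (k - i) (snd p) * shw q (fst p) (snd p) w)
      = (if k = int (length w) then ?t p else 0)" .
  qed
  also have "\<dots> = homog (vstar q f g) k w"
    by (simp add: homog_def vstar_eq_sum_word_splits)
  finally show "lsmul q (homog f) (homog g) k w = homog (vstar q f g) k w" .
qed

lemma mmul_homog:
  assumes "\<And>l. l \<in> {1..n} \<Longrightarrow> X i l = homog (A l)"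
    and "\<And>l. l \<in> {1..n} \<Longrightarrow> Y l k = homog (B l)"
  shows "mmul q n X Y i k = homog (\<lambda>w. \<Sum>l\<in>{1..n}. vstar q (A l) (B l) w)"
proof -
  have "mmul q n X Y i k = (\<lambda>d w. \<Sum>l\<in>{1..n}. homog (vstar q (A l) (B l)) d w)"
    unfolding mmul_def lsmul_homog[symmetric] using assms by (auto intro!: sum.cong)
  then show ?thesis
    by (auto simp: homog_def fun_eq_iff)
qed

lemma mmul_constmat_left:
  assumes "\<And>l. l \<in> {1..n} \<Longrightarrow> Y l k = homog (B l)"
  shows "mmul q n (constmat M) Y i k = homog (\<lambda>w. \<Sum>l\<in>{1..n}. M i l * B l w)"
proof -
  have "mmul q n (constmat M) Y i k
      = homog (\<lambda>w. \<Sum>l\<in>{1..n}. vstar q (\<lambda>u. if u = [] then M i l else 0) (B l) w)"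
    by (rule mmul_homog) (simp_all add: constmat_eq_homog assms)
  then show ?thesis
    by (simp add: vstar_unit_left)
qed

lemma mmul_constmat_right:
  assumes "\<And>l. l \<in> {1..n} \<Longrightarrow> X i l = homog (A l)"
  shows "mmul q n X (constmat M) i k = homog (\<lambda>w. \<Sum>l\<in>{1..n}. M l k * A l w)"
proof -
  have "mmul q n X (constmat M) i k
      = homog (\<lambda>w. \<Sum>l\<in>{1..n}. vstar q (A l) (\<lambda>v. if v = [] then M l k else 0) w)"
    by (rule mmul_homog) (simp_all add: constmat_eq_homog assms)
  then show ?thesis
    by (simp add: vstar_unit_right mult.commute)
qed


section \<open>\<open>q\<close>-integers at a generic \<open>q\<close>\<close>

lemma qint_0 [simp]: "qint q 0 = 0"
  by (simp add: qint_def)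

lemma qint_uminus: "qint q (- t) = - qint q t"
  unfolding qint_def minus_divide_left minus_diff_eq by simp

lemma qfact_Suc: "qfact q (Suc k) = qfact q k * qint q (int (Suc k))"
  by (simp add: qfact_def)

lemma sqfact_Suc: "sqfact sr q (Suc k) = sqfact sr q k * sr (qint q (int (Suc k)))"
  by (simp add: sqfact_def)

lemma qfact_eq_qfact_diff_mult_prod:
  "k \<le> n \<Longrightarrow> qfact q n = qfact q (n - k) * (\<Prod>t<k. qint q (int n - int t))"
proof (induction k)
  case (Suc k)
  then have "n - k = Suc (n - Suc k)"
    by simp
  then have "qfact q (n - k) = qfact q (n - Suc k) * qint q (int n - int k)"
    using Suc.prems by (simp add: qfact_Suc of_nat_diff)
  with Suc show ?case
    by (simp add: algebra_simps)
qed simp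

lemma qpow_eq_powi: "2 * r = of_int z \<Longrightarrow> qpow h r = h powi z"
  by (simp add: qpow_def)

lemma qpow_half: "qpow h (of_nat m / 2) = h powi int m"
  by (rule qpow_eq_powi) simp

lemma qpow_neg_half: "qpow h (-1/2) = h powi (-1)"
  by (rule qpow_eq_powi) simp

lemma power_int_numeral_mult: "(x::'a::division_ring) powi (numeral c * n) = (x powi n) ^ numeral c"
  by (simp add: power_int_mult[of x n "numeral c"] mult.commute)

locale generic_q =
  fixes sr :: "'a::field_char_0 \<Rightarrow> 'a" and q h :: 'a
  assumes q_nonzero: "q \<noteq> 0"
    and q_not_root_of_unity: "\<forall>n::nat. n > 0 \<longrightarrow> q ^ n \<noteq> 1"
    and h_square: "h * h = q"
    and sr_square: "\<forall>z. sr z * sr z = z"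
begin

lemma h_nonzero: "h \<noteq> 0"
  using h_square q_nonzero by auto

lemma q_powi_eq_h_powi: "q powi n = h powi n * h powi n"
  using h_square[symmetric] by (simp add: power_int_mult_distrib)

lemma q_power_inject: "q ^ a = q ^ b \<Longrightarrow> a = b"
proof (induction a b rule: linorder_wlog)
  case (le a b)
  then have "q ^ a * q ^ (b - a) = q ^ a * 1"
    by (metis le.hyps le_add_diff_inverse mult_1_right power_add)
  then have "q ^ (b - a) = 1"
    using q_nonzero by simp
  then have "b - a = 0"
    using q_not_root_of_unity by (meson not_gr0)
  with le show ?case
    by simp
qed auto

lemma q_minus_inverse_nonzero: "q - inverse q \<noteq> 0"
proof
  assume "q - inverse q = 0"
  then have "q ^ 2 = q ^ 0"
    using q_nonzero by (simp add: field_simps power2_eq_square)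
  then show False
    using q_power_inject by fastforce
qed

lemma qint_1 [simp]: "qint q 1 = 1"
  using q_minus_inverse_nonzero by (simp add: qint_def)

lemma qint_add_one: "q powi (n + 1) + qint q n = q * qint q (n + 1)"
  using q_nonzero q_minus_inverse_nonzero
  by (simp add: qint_def power_int_add power_int_diff power_int_minus field_simps)

lemma qint_eq_h_recurrence: "qint q I = h * h * qint q (1 + I) - h powi I * h * (h powi I * h)"
proof -
  have "h powi I * h * (h powi I * h) + qint q I = h * h * qint q (I + 1)"
    using qint_add_one[of I] by (simp add: q_powi_eq_h_powi power_int_add h_nonzero h_square)
  then show ?thesis
    by (simp add: add.commute eq_diff_eq)
qed

lemma qint_of_nat_eq: "qint q (int n) = (q ^ n - inverse (q ^ n)) / (q - inverse q)"
  by (simp add: qint_def power_int_minus)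

lemma qint_add_qint_nonzero:
  assumes "0 < a + b"
  shows "qint q (int a) + qint q (int b) \<noteq> 0"
proof
  assume "qint q (int a) + qint q (int b) = 0"
  then have "(q ^ a - inverse (q ^ a)) + (q ^ b - inverse (q ^ b)) = 0"
    using q_minus_inverse_nonzero by (simp add: qint_of_nat_eq add_divide_distrib[symmetric])
  then have "(q ^ a + q ^ b) * (q ^ (a + b) - 1) = 0"
    using q_nonzero by (simp add: field_simps power_add)
  then consider "q ^ (a + b) = q ^ 0" | "q ^ a = - (q ^ b)"
    by (auto simp: eq_neg_iff_add_eq_0)
  then show False
  proof cases
    case 1
    with assms show False
      using q_power_inject by fastforce
  next
    case 2
    then have "q ^ (2 * a) = q ^ (2 * b)"
      by (simp add: power_mult power2_eq_square mult.commute[of 2])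
    then have "a = b"
      by (auto dest: q_power_inject)
    with 2 have "q ^ a = 0"
      by simp
    then show False
      using q_nonzero by simp
  qed
qed

lemma qint_nonzero: "t \<noteq> 0 \<Longrightarrow> qint q t \<noteq> 0"
proof -
  have pos: "qint q (int n) \<noteq> 0" if "n > 0" for n
    using qint_add_qint_nonzero[of n n] that by simp
  assume "t \<noteq> 0"
  then consider "t > 0" | "- t > 0" by linarith
  then show ?thesis
    using pos[of "nat t"] pos[of "nat (- t)"] by cases (auto simp: qint_uminus)
qed

lemma sr_0 [simp]: "sr 0 = 0"
  using sr_square by (metis mult_zero_left no_zero_divisors)

lemma sr_mult_sr: "sr z * sr z = z"
  using sr_square by simp

lemma sr_mult_sr_mult: "sr z * (sr z * r) = z * r"
  using sr_square by (metis mult.assoc)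

lemma sr_qint_nonzero: "t \<noteq> 0 \<Longrightarrow> sr (qint q t) \<noteq> 0"
  using qint_nonzero sr_0 sr_square by (metis mult_zero_left)

lemma qfact_nonzero: "qfact q n \<noteq> 0"
  unfolding qfact_def by (simp add: qint_nonzero)

lemma sqfact_nonzero: "sqfact sr q n \<noteq> 0"
  unfolding sqfact_def by (simp add: sr_qint_nonzero)

lemma sqfact_mult_sqfact: "sqfact sr q n * sqfact sr q n = qfact q n"
  by (induction n) (simp_all add: sqfact_def qfact_def, simp add: sqfact_Suc qfact_Suc sr_mult_sr_mult algebra_simps)

end


section \<open>The entries of \<open>K\<close> as weighted lattice paths\<close>

lemma bar_simps [simp]: "bar Lx = 1" "bar Ly = -1"
  by (simp_all add: bar_def)

definition height :: "letter list \<Rightarrow> int" where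
  "height u = sum_list (map bar u)"

lemma height_simps [simp]: "height [] = 0" "height (c # u) = bar c + height u"
  by (simp_all add: height_def)

lemma height_append [simp]: "height (u @ v) = height u + height v"
  by (simp add: height_def)

lemma height_replicate [simp]:
  "height (replicate i Lx) = int i" "height (replicate i Ly) = - int i"
  by (induction i) auto

lemma even_length_add_height: "even (int (length u) + height u)"
  by (induction u) (auto simp: bar_def)

lemma sum_pairing_eq_height: "(\<Sum>l\<leftarrow>u. pairing c l) = 2 * bar c * height u"
proof -
  have "pairing c l = 2 * bar c * bar l" for l
    by (cases c; cases l) (simp_all add: pairing_def)
  then show ?thesis
    by (induction u) (simp_all add: algebra_simps)
qed

fun path_qprod :: "'a::field \<Rightarrow> int \<Rightarrow> int \<Rightarrow> letter list \<Rightarrow> 'a" where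
  "path_qprod q M s [] = 1"
| "path_qprod q M s (c # u) = qint q (s + M * (bar c + 1) div 2) * path_qprod q M (s + bar c) u"

lemma prod_eq_path_qprod:
  "(\<Prod>i<length u. qint q (s + sum_list (map bar (take i u)) + M * (bar (u ! i) + 1) div 2))
   = path_qprod q M s u"
proof (induction u arbitrary: s)
  case (Cons c u)
  have "(\<Prod>i<length (c # u). qint q (s + sum_list (map bar (take i (c # u))) + M * (bar ((c # u) ! i) + 1) div 2))
    = qint q (s + M * (bar c + 1) div 2)
      * (\<Prod>i<length u. qint q ((s + bar c) + sum_list (map bar (take i u)) + M * (bar (u ! i) + 1) div 2))"
    unfolding length_Cons prod.lessThan_Suc_shift by (simp add: algebra_simps)
  with Cons show ?case
    by simp
qed simp

lemma path_qprod_append: "path_qprod q M s (u @ v) = path_qprod q M s u * path_qprod q M (s + height u) v"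
  by (induction u arbitrary: s) (simp_all add: algebra_simps)

lemma path_qprod_replicate_Lx: "path_qprod q M s (replicate i Lx) = (\<Prod>t<i. qint q (s + int t + M))"
  by (induction i arbitrary: s) (simp_all del: prod.lessThan_Suc add: prod.lessThan_Suc_shift algebra_simps)

lemma path_qprod_replicate_Ly: "path_qprod q M (int k) (replicate k Ly) = qfact q k"
  by (induction k) (simp_all add: qfact_def qfact_Suc)

text \<open>A path starting at a nonnegative height that dips below zero has to step down from height 0,
  which contributes the factor \<open>[0]\<^sub>q = 0\<close>.\<close>

lemma path_qprod_eq_0_if_negative:
  "0 \<le> s \<Longrightarrow> i \<le> length u \<Longrightarrow> s + sum_list (map bar (take i u)) < 0 \<Longrightarrow> path_qprod q M s u = 0"
proof (induction u arbitrary: s i)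
  case (Cons c u)
  show ?case
  proof (cases "c = Ly \<and> s = 0")
    case False
    then have "0 \<le> s + bar c"
      using Cons.prems(1) by (cases c) auto
    moreover obtain i' where "i = Suc i'"
      using Cons.prems by (cases i) auto
    ultimately have "path_qprod q M (s + bar c) u = 0"
      using Cons.IH Cons.prems by (simp add: algebra_simps)
    then show ?thesis by simp
  qed simp
qed simp

lemma Delta_n_eq_path_qprod:
  "Delta_n q M n w = (if length w = 2 * n \<and> height w = 0 then path_qprod q M 0 w else 0)"
proof (cases "length w = 2 * n \<and> height w = 0")
  case True
  show ?thesis
  proof (cases "catalan w")
    case True
    then show ?thesis using \<open>length w = 2 * n \<and> height w = 0\<close> prod_eq_path_qprod[of q 0 w M]
      by (simp add: Delta_n_def)
  next
    case False
    then obtain i where "i \<le> length w" "sum_list (map bar (take i w)) < 0"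
      using True by (auto simp: catalan_def height_def not_le)
    then show ?thesis
      using False path_qprod_eq_0_if_negative[of 0 i w q M] by (simp add: Delta_n_def)
  qed
qed (auto simp: Delta_n_def catalan_def height_def)

lemma tsubst_negsq_DeltaS:
  "tsubst_negsq (DeltaS q M) d v
   = (if d = int (length v) \<and> height v = 0 then (-1) ^ (length v div 2) * path_qprod q M 0 v else 0)"
proof (cases "d = int (length v) \<and> height v = 0")
  case True
  then have "even (length v)"
    using even_length_add_height[of v] by simp
  with True show ?thesis
    by (auto simp: tsubst_negsq_def DeltaS_def Delta_n_eq_path_qprod power_int_def nat_div_distrib
        elim!: evenE)
next
  case False
  then show ?thesis
    by (auto simp: tsubst_negsq_def DeltaS_def Delta_n_eq_path_qprod)
qed

lemma funpow_del_x_left: "(del_x_left ^^ j) f = (\<lambda>k w. f k (replicate j Lx @ w))"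
  by (induction j) (simp_all add: del_x_left_def replicate_append_same[symmetric])

lemma funpow_del_y_right: "(del_y_right ^^ j) f = (\<lambda>k w. f k (w @ replicate j Ly))"
  by (induction j) (simp_all add: del_y_right_def replicate_append_same[symmetric])

definition rho_int :: "int \<Rightarrow> int \<Rightarrow> int \<Rightarrow> int" where
  "rho_int n i k = k * k + i * i - 4 * i * k + n * (i + k) - n * (n - 1) div 2"

lemma two_rho_eq_rho_int: "2 * rho a b (of_nat n / 2) = of_int (rho_int (int n) (int b - 1) (int n + 1 - int a))"
proof -
  have half: "(of_int (int n * (int n - 1) div 2) :: rat) = of_int (int n * (int n - 1)) / 2"
    by (subst of_int_div) auto
  show ?thesis
    unfolding rho_int_def of_int_diff half rho_def by (simp add: power2_eq_square) algebra
qed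

lemma rho_int_succ: "rho_int n (i + 1) k = rho_int n i k + 2 * i + 1 - 4 * k + n"
  by (simp add: rho_int_def algebra_simps)

definition neg_tri_power :: "'a::field \<Rightarrow> int \<Rightarrow> 'a" where
  "neg_tri_power h n = h powi (- (n * (n - 1) div 2))"

lemma neg_tri_power_succ: "h \<noteq> 0 \<Longrightarrow> neg_tri_power h (n + 1) = neg_tri_power h n * h powi (- n)"
proof -
  assume "h \<noteq> 0"
  moreover have "(n + 1) * (n + 1 - 1) div 2 = n * (n - 1) div 2 + n"
    by (simp add: algebra_simps)
  ultimately show ?thesis
    by (simp add: neg_tri_power_def power_int_add[symmetric] algebra_simps)
qed

text \<open>\<open>Kword sr q h n \<lambda> i k u\<close> is the coefficient of the word \<open>u\<close> in the entry \<open>(n + 1 - k, i + 1)\<close>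
  of \<open>K^(n/2)(\<lambda> t)\<close>, read as a lattice path from height \<open>i\<close> to height \<open>k\<close>.\<close>

definition Kstep :: "('a::field \<Rightarrow> 'a) \<Rightarrow> 'a \<Rightarrow> 'a \<Rightarrow> int \<Rightarrow> int \<Rightarrow> int \<Rightarrow> letter \<Rightarrow> 'a" where
  "Kstep sr q h n k i c = (if c = Lx
     then h powi (4 * k - 2 * i - 1 - n) * sr (qint q (i + 1)) * sr (qint q (n - i))
     else h powi (2 * i - 1 - 4 * k + n) * sr (qint q i) * sr (qint q (n + 1 - i)))"

fun Kword :: "('a::field \<Rightarrow> 'a) \<Rightarrow> 'a \<Rightarrow> 'a \<Rightarrow> int \<Rightarrow> 'a \<Rightarrow> int \<Rightarrow> int \<Rightarrow> letter list \<Rightarrow> 'a" where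
  "Kword sr q h n lam i k [] = (if i = k then h powi (2 * n * k - 2 * k * k) * neg_tri_power h n else 0)"
| "Kword sr q h n lam i k (c # u) = lam * Kstep sr q h n k i c * Kword sr q h n lam (i + bar c) k u"

lemma Kword_nonzero_height: "Kword sr q h n lam i k u \<noteq> 0 \<Longrightarrow> i + height u = k"
proof (induction u arbitrary: i)
  case (Cons c u)
  then show ?case
    by (cases c) (fastforce split: if_splits)+
qed (simp split: if_splits)

lemma Kword_twist:
  "q powi (\<Sum>l\<leftarrow>u. pairing c l) * Kword sr q h n lam i k u
   = q powi (2 * bar c * (k - i)) * Kword sr q h n lam i k u"
  using Kword_nonzero_height[of sr q h n lam i k u]
  by (cases "Kword sr q h n lam i k u = 0") (auto simp: sum_pairing_eq_height)

lemma Kword_scale: "Kword sr q h n lam i k u = lam ^ length u * Kword sr q h n 1 i k u"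
  by (induction u arbitrary: i) (simp_all add: algebra_simps)

lemma tsubst_scale_homog_Kword:
  "tsubst_scale c (homog (Kword sr q h n 1 i k)) = homog (Kword sr q h n c i k)"
  unfolding tsubst_scale_homog by (rule arg_cong[where f = homog], rule ext, rule Kword_scale[symmetric])


context generic_q
begin

lemma phi_eq_step_mult_phi:
  assumes "i < n" "k \<le> n"
  shows "phi sr q h (n + 1 - k) (i + 1) n = h powi (4 * int k - 2 * int i - 1 - int n)
    * sr (qint q (int i + 1)) * sr (qint q (int n - int i)) * phi sr q h (n + 1 - k) (i + 2) n"
proof -
  have rho1: "qpow h (rho (n + 1 - k) (i + 1) (of_nat n / 2)) = h powi (rho_int (int n) (int i) (int k))"
    by (rule qpow_eq_powi) (use assms in \<open>simp add: two_rho_eq_rho_int of_nat_diff\<close>)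
  have rho2: "qpow h (rho (n + 1 - k) (i + 2) (of_nat n / 2)) = h powi (rho_int (int n) (int i + 1) (int k))"
    by (rule qpow_eq_powi) (use assms in \<open>simp add: two_rho_eq_rho_int of_nat_diff algebra_simps\<close>)
  have rho12: "h powi (rho_int (int n) (int i) (int k))
      = h powi (4 * int k - 2 * int i - 1 - int n) * h powi (rho_int (int n) (int i + 1) (int k))"
    unfolding rho_int_succ by (simp add: power_int_add[symmetric] h_nonzero algebra_simps)
  have idx: "n + 1 - k - 1 = n - k" "n + 1 - (i + 1) = n - i" "i + 1 - 1 = i" "n + 1 - (n + 1 - k) = k"
    "n + 1 - (i + 2) = n - i - 1" "i + 2 - 1 = Suc i"
    using assms by auto
  have sqfact1: "sqfact sr q (n - i) = sqfact sr q (n - i - 1) * sr (qint q (int n - int i))"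
    using assms sqfact_Suc[of sr q "n - i - 1"] by (simp add: Suc_diff_Suc of_nat_diff)
  have sqfact2: "sqfact sr q (Suc i) = sqfact sr q i * sr (qint q (int i + 1))"
    using sqfact_Suc[of sr q i] by (simp add: add.commute)
  have "sr (qint q (int i + 1)) \<noteq> 0"
    by (rule sr_qint_nonzero) simp
  then show ?thesis
    unfolding phi_def rho1 rho2 idx sqfact1 sqfact2 rho12
    using sqfact_nonzero[of i] sqfact_nonzero[of k] by (simp add: field_simps)
qed

lemma phi_diag:
  assumes "k \<le> n"
  shows "phi sr q h (n + 1 - k) (k + 1) n * qfact q k * (\<Prod>t<k. qint q (int t - int n)) * (-1) ^ k
    = h powi (2 * int n * int k - 2 * int k * int k) * neg_tri_power h (int n)"
proof -
  have rho: "qpow h (rho (n + 1 - k) (k + 1) (of_nat n / 2)) = h powi (rho_int (int n) (int k) (int k))"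
    by (rule qpow_eq_powi) (use assms in \<open>simp add: two_rho_eq_rho_int of_nat_diff\<close>)
  have rho_diag: "h powi (rho_int (int n) (int k) (int k))
      = h powi (2 * int n * int k - 2 * int k * int k) * neg_tri_power h (int n)"
    unfolding neg_tri_power_def rho_int_def by (simp add: power_int_add[symmetric] h_nonzero algebra_simps)
  have idx: "n + 1 - k - 1 = n - k" "n + 1 - (k + 1) = n - k" "k + 1 - 1 = k" "n + 1 - (n + 1 - k) = k"
    using assms by auto
  have sign: "(\<Prod>t<k. qint q (int t - int n)) * (-1) ^ k = (\<Prod>t<k. qint q (int n - int t))"
  proof -
    have "(\<Prod>t<k. qint q (int n - int t)) = (\<Prod>t<k. (-1) * qint q (int t - int n))"
      by (rule prod.cong) (simp_all add: qint_uminus[symmetric])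
    then show ?thesis
      unfolding prod.distrib by simp
  qed
  have "phi sr q h (n + 1 - k) (k + 1) n * qfact q k * (\<Prod>t<k. qint q (int t - int n)) * (-1) ^ k
     = h powi (rho_int (int n) (int k) (int k)) * inverse (qfact q n) * (qfact q (n - k) / qfact q k)
       * qfact q k * (\<Prod>t<k. qint q (int n - int t))"
    unfolding phi_def rho idx sign[symmetric] by (simp add: sqfact_mult_sqfact mult.assoc)
  also have "\<dots> = h powi (rho_int (int n) (int k) (int k))"
    using qfact_eq_qfact_diff_mult_prod[OF assms, of q] qfact_nonzero[of k] qfact_nonzero[of n]
    by (simp add: field_simps)
  finally show ?thesis
    unfolding rho_diag .
qed

definition Kclosed :: "nat \<Rightarrow> nat \<Rightarrow> nat \<Rightarrow> letter list \<Rightarrow> 'a" where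
  "Kclosed n i k u = phi sr q h (n + 1 - k) (i + 1) n * qfact q k
     * (\<Prod>t<i. qint q (int t - int n)) * (-1) ^ ((length u + i + k) div 2)
     * (if int i + height u = int k then path_qprod q (- int n) (int i) u else 0)"

lemma Kclosed_Nil: "k \<le> n \<Longrightarrow> Kclosed n i k [] = Kword sr q h (int n) 1 (int i) (int k) []"
  using phi_diag[of k n] by (simp add: Kclosed_def)

lemma Kclosed_Cons_Lx:
  assumes "i \<le> n" "k \<le> n"
  shows "Kclosed n i k (Lx # u) = Kstep sr q h (int n) (int k) (int i) Lx * Kclosed n (i + 1) k u"
proof (cases "i = n")
  case False
  then have "i < n"
    using assms by simp
  have half: "int i + - (int n * 2) div 2 = int i - int n"
    by simp
  show ?thesis
    unfolding Kclosed_def Kstep_def phi_eq_step_mult_phi[OF \<open>i < n\<close> assms(2)]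
    by (simp add: algebra_simps half)
next
  case True
  have "- (int n * 2) div 2 = - int n"
    by simp
  with True show ?thesis
    by (simp add: Kclosed_def Kstep_def)
qed

lemma Kclosed_Cons_Ly:
  assumes "i < n" "k \<le> n"
  shows "Kclosed n (i + 1) k (Ly # u) = Kstep sr q h (int n) (int k) (int i + 1) Ly * Kclosed n i k u"
proof -
  have h_cancel: "h powi (2 * (int i + 1) - 1 - 4 * int k + int n) * h powi (4 * int k - 2 * int i - 1 - int n) = 1"
    by (simp add: power_int_add[symmetric] h_nonzero)
  have sign: "(length (Ly # u) + (i + 1) + k) div 2 = (length u + i + k) div 2 + 1"
    by simp
  have step: "Kstep sr q h (int n) (int k) (int i + 1) Ly * Kclosed n i k u
    = (h powi (2 * (int i + 1) - 1 - 4 * int k + int n) * h powi (4 * int k - 2 * int i - 1 - int n))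
      * (sr (qint q (int i + 1)) * sr (qint q (int i + 1)))
      * (sr (qint q (int n - int i)) * sr (qint q (int n - int i)))
      * phi sr q h (n + 1 - k) (i + 2) n * qfact q k
      * (\<Prod>t<i. qint q (int t - int n)) * (-1) ^ ((length u + i + k) div 2)
      * (if int i + height u = int k then path_qprod q (- int n) (int i) u else 0)"
    unfolding Kclosed_def Kstep_def phi_eq_step_mult_phi[OF assms]
    by (simp add: algebra_simps)
  show ?thesis
    unfolding step unfolding Kclosed_def sign h_cancel sr_mult_sr
    using qint_uminus[of q "int n - int i"] by (simp add: algebra_simps)
qed

lemma Kword_eq_Kclosed:
  assumes "i \<le> n" "k \<le> n"
  shows "Kword sr q h (int n) 1 (int i) (int k) u = Kclosed n i k u"
  using assms(1)
proof (induction u arbitrary: i)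
  case Nil
  show ?case
    using Kclosed_Nil[OF assms(2)] by simp
next
  case (Cons c u)
  show ?case
  proof (cases c)
    case Lx
    show ?thesis
    proof (cases "i = n")
      case False
      with Cons.prems have "Kword sr q h (int n) 1 (int i + 1) (int k) u = Kclosed n (i + 1) k u"
        using Cons.IH[of "i + 1"] by (simp add: add.commute)
      with Lx Cons.prems show ?thesis
        by (simp add: Kclosed_Cons_Lx assms(2))
    next
      case True
      with Lx show ?thesis
        by (simp add: Kclosed_Cons_Lx assms(2) Kstep_def)
    qed
  next
    case Ly
    show ?thesis
    proof (cases i)
      case (Suc j)
      with Cons Ly show ?thesis
        using Kclosed_Cons_Ly[of j n k u] assms(2) by (simp add: add.commute)
    qed (simp add: Ly Kclosed_def Kstep_def)
  qed
qed

lemma Kmat_eq_homog_Kword: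
  assumes "1 \<le> a" "a \<le> n + 1" "1 \<le> b" "b \<le> n + 1"
  shows "Kmat sr q h n a b = homog (Kword sr q h (int n) 1 (int b - 1) (int n + 1 - int a))"
proof (intro ext)
  fix d w
  define i where "i = b - 1"
  define k where "k = n + 1 - a"
  have ab: "a = n + 1 - k" "b = i + 1" "int b - 1 = int i" "int n + 1 - int a = int k"
    and "i \<le> n" "k \<le> n"
    using assms by (auto simp: i_def k_def)
  define v where "v = replicate i Lx @ w @ replicate k Ly"
  have v: "int (length v) = int i + int (length w) + int k" "height v = int i + height w - int k"
    "path_qprod q (- int n) 0 v
       = (\<Prod>t<i. qint q (int t - int n)) * path_qprod q (- int n) (int i) w * qfact q k"
    if "int i + height w = int k"
    using that path_qprod_replicate_Ly[of q "- int n" k]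
    by (simp_all add: v_def path_qprod_append path_qprod_replicate_Lx algebra_simps)
  have "Kmat sr q h n a b d w = phi sr q h a b n * tsubst_negsq (DeltaS q (- int n)) (d + int i + int k) v"
    unfolding Kmat_def lsscale_def tshift_def funpow_del_x_left funpow_del_y_right
    using assms by (simp add: i_def k_def v_def of_nat_diff algebra_simps)
  also have "\<dots> = homog (Kword sr q h (int n) 1 (int b - 1) (int n + 1 - int a)) d w"
  proof (cases "d = int (length w) \<and> int i + height w = int k")
    case True
    then have "(length v) div 2 = (length w + i + k) div 2"
      using v by (simp add: nat_int_add)
    with True v show ?thesis
      unfolding tsubst_negsq_DeltaS homog_def ab(3,4)
      by (simp add: ab(1,2) Kword_eq_Kclosed[OF \<open>i \<le> n\<close> \<open>k \<le> n\<close>] Kclosed_def algebra_simps)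
  next
    case False
    then show ?thesis
      unfolding tsubst_negsq_DeltaS homog_def ab(3,4)
      by (auto simp: v_def Kword_eq_Kclosed[OF \<open>i \<le> n\<close> \<open>k \<le> n\<close>] Kclosed_def)
  qed
  finally show "Kmat sr q h n a b d w = homog (Kword sr q h (int n) 1 (int b - 1) (int n + 1 - int a)) d w" .
qed


section \<open>Shuffling a path of \<open>K^(1/2)\<close> with a path of \<open>K^(j)\<close>\<close>

definition Kshuffle :: "int \<Rightarrow> int \<Rightarrow> int \<Rightarrow> int \<Rightarrow> int \<Rightarrow> 'a vv" where
  "Kshuffle m k1 k2 i1 i2 = vstar q (Kword sr q h 1 (h powi m) i1 k1) (Kword sr q h m (h powi (-1)) i2 k2)"

lemma Kshuffle_Nil:
  "Kshuffle m k1 k2 i1 i2 [] = Kword sr q h 1 (h powi m) i1 k1 [] * Kword sr q h m (h powi (-1)) i2 k2 []"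
  by (simp add: Kshuffle_def vstar_Nil)

lemma Kshuffle_Cons: "Kshuffle m k1 k2 i1 i2 (c # w)
  = h powi m * Kstep sr q h 1 k1 i1 c * Kshuffle m k1 k2 (i1 + bar c) i2 w
  + q powi (2 * bar c * (k1 - i1)) * h powi (-1) * Kstep sr q h m k2 i2 c * Kshuffle m k1 k2 i1 (i2 + bar c) w"
  unfolding Kshuffle_def vstar_Cons Kword_twist Kword.simps
  by (simp add: vstar_scale_left vstar_scale_right mult.assoc)

text \<open>\<open>Ecoef0\<close> and \<open>Ecoef1\<close> are the two nonzero entries of a column of \<open>E\<close> (scaled by
  \<open>sr [m + 1]\<^sub>q\<close>) times the weight of \<open>R\<close> they pick up; \<open>Fcoef\<close> is the numerator of the matching
  entry of \<open>F\<close>.\<close>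

definition Ecoef0 :: "int \<Rightarrow> int \<Rightarrow> int \<Rightarrow> 'a" where
  "Ecoef0 m k2 I = sr (qint q (m + 1 - I)) * h powi (2 * k2 - m)"

definition Ecoef1 :: "int \<Rightarrow> int \<Rightarrow> int \<Rightarrow> 'a" where
  "Ecoef1 m k2 I = sr (qint q I) * h powi (m - 2 * k2)"

definition Kcoupled :: "int \<Rightarrow> int \<Rightarrow> int \<Rightarrow> int \<Rightarrow> 'a vv" where
  "Kcoupled m k1 k2 I w = Ecoef0 m k2 I * Kshuffle m k1 k2 0 I w + Ecoef1 m k2 I * Kshuffle m k1 k2 1 (I - 1) w"

definition Fcoef :: "int \<Rightarrow> int \<Rightarrow> int \<Rightarrow> 'a" where
  "Fcoef m k1 K = (if k1 = 0 then sr (qint q (m + 1 - K)) else sr (qint q K))"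

text \<open>The coupling identities say that \<open>Kcoupled\<close> obeys the step recursion of \<open>K^(j+1/2)\<close>;
  the two mixed ones rest on the recurrence \<open>qint_eq_h_recurrence\<close> of the \<open>q\<close>-integers.\<close>

lemma coupling_x0:
  "Ecoef0 m k2 I * (q powi (2 * k1) * h powi (-1) * Kstep sr q h m k2 I Lx)
   = Kstep sr q h (m + 1) (k1 + k2) I Lx * Ecoef0 m k2 (I + 1)"
  unfolding Ecoef0_def Kstep_def
  apply (simp add: q_powi_eq_h_powi)
  apply (simp add: power_int_add power_int_diff power_int_minus power_int_numeral_mult h_nonzero)
  apply (simp add: field_simps h_nonzero power2_eq_square)
  done

lemma coupling_x1:
  "Ecoef0 m k2 I * (h powi m * Kstep sr q h 1 k1 0 Lx)
   + Ecoef1 m k2 I * (q powi (2 * (k1 - 1)) * h powi (-1) * Kstep sr q h m k2 (I - 1) Lx)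
   = Kstep sr q h (m + 1) (k1 + k2) I Lx * Ecoef1 m k2 (I + 1)"
  unfolding Ecoef0_def Ecoef1_def Kstep_def
  apply (simp add: q_powi_eq_h_powi)
  apply (simp add: power_int_add power_int_diff power_int_minus power_int_numeral_mult h_nonzero sr_mult_sr)
  apply (simp add: field_simps h_nonzero)
  apply (simp only: sr_mult_sr_mult)
  apply (subst qint_eq_h_recurrence[of I])
  by algebra

lemma coupling_y0:
  "Ecoef0 m k2 I * (q powi (- (2 * k1)) * h powi (-1) * Kstep sr q h m k2 I Ly)
   + Ecoef1 m k2 I * (h powi m * Kstep sr q h 1 k1 1 Ly)
   = Kstep sr q h (m + 1) (k1 + k2) I Ly * Ecoef0 m k2 (I - 1)"
proof -
  have qint_shift: "qint q (1 + m - I) = h * h * qint q (m + 2 - I)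
      - h powi (1 + m - I) * h * (h powi (1 + m - I) * h)"
  proof -
    have "1 + (1 + m - I) = m + 2 - I"
      by simp
    then show ?thesis
      using qint_eq_h_recurrence[of "1 + m - I"] by (simp only:)
  qed
  show ?thesis
    unfolding Ecoef0_def Ecoef1_def Kstep_def
    apply (simp add: q_powi_eq_h_powi)
    apply (simp add: power_int_add power_int_diff power_int_minus power_int_numeral_mult h_nonzero sr_mult_sr)
    apply (simp add: field_simps h_nonzero)
    apply (simp only: sr_mult_sr_mult sr_mult_sr qint_1)
    apply (subst qint_shift)
    apply (simp add: power_int_add power_int_diff power_int_minus power_int_numeral_mult h_nonzero)
    apply (simp add: field_simps h_nonzero)
    by algebra
qed

lemma coupling_y1:
  "Ecoef1 m k2 I * (q powi (- (2 * (k1 - 1))) * h powi (-1) * Kstep sr q h m k2 (I - 1) Ly)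
   = Kstep sr q h (m + 1) (k1 + k2) I Ly * Ecoef1 m k2 (I - 1)"
  unfolding Ecoef1_def Kstep_def
  apply (simp add: q_powi_eq_h_powi)
  apply (simp add: power_int_add power_int_diff power_int_minus power_int_numeral_mult h_nonzero)
  apply (simp add: field_simps h_nonzero power2_eq_square)
  by (simp add: power3_eq_cube power4_eq_xxxx)

lemma Kcoupled_Cons_Lx:
  "Kcoupled m k1 k2 I (Lx # w) = Kstep sr q h (m + 1) (k1 + k2) I Lx * Kcoupled m k1 k2 (I + 1) w"
proof -
  have first: "Kshuffle m k1 k2 0 I (Lx # w) = h powi m * Kstep sr q h 1 k1 0 Lx * Kshuffle m k1 k2 1 I w
      + q powi (2 * k1) * h powi (-1) * Kstep sr q h m k2 I Lx * Kshuffle m k1 k2 0 (I + 1) w"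
    using Kshuffle_Cons[of m k1 k2 0 I Lx w] by simp
  have second: "Kshuffle m k1 k2 1 (I - 1) (Lx # w)
      = q powi (2 * (k1 - 1)) * h powi (-1) * Kstep sr q h m k2 (I - 1) Lx * Kshuffle m k1 k2 1 I w"
    using Kshuffle_Cons[of m k1 k2 1 "I - 1" Lx w] by (simp add: Kstep_def)
  have "Kcoupled m k1 k2 I (Lx # w)
      = (Ecoef0 m k2 I * (q powi (2 * k1) * h powi (-1) * Kstep sr q h m k2 I Lx)) * Kshuffle m k1 k2 0 (I + 1) w
      + (Ecoef0 m k2 I * (h powi m * Kstep sr q h 1 k1 0 Lx)
         + Ecoef1 m k2 I * (q powi (2 * (k1 - 1)) * h powi (-1) * Kstep sr q h m k2 (I - 1) Lx))
        * Kshuffle m k1 k2 1 I w"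
    unfolding Kcoupled_def first second by (simp add: algebra_simps)
  then show ?thesis
    unfolding coupling_x0 coupling_x1 Kcoupled_def by (simp add: algebra_simps)
qed

lemma Kcoupled_Cons_Ly:
  "Kcoupled m k1 k2 I (Ly # w) = Kstep sr q h (m + 1) (k1 + k2) I Ly * Kcoupled m k1 k2 (I - 1) w"
proof -
  have first: "Kshuffle m k1 k2 0 I (Ly # w)
      = q powi (- (2 * k1)) * h powi (-1) * Kstep sr q h m k2 I Ly * Kshuffle m k1 k2 0 (I - 1) w"
    using Kshuffle_Cons[of m k1 k2 0 I Ly w] by (simp add: Kstep_def)
  have second: "Kshuffle m k1 k2 1 (I - 1) (Ly # w) = h powi m * Kstep sr q h 1 k1 1 Ly * Kshuffle m k1 k2 0 (I - 1) w
      + q powi (- (2 * (k1 - 1))) * h powi (-1) * Kstep sr q h m k2 (I - 1) Ly * Kshuffle m k1 k2 1 (I - 1 - 1) w"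
    using Kshuffle_Cons[of m k1 k2 1 "I - 1" Ly w] by simp
  have "Kcoupled m k1 k2 I (Ly # w)
      = (Ecoef0 m k2 I * (q powi (- (2 * k1)) * h powi (-1) * Kstep sr q h m k2 I Ly)
         + Ecoef1 m k2 I * (h powi m * Kstep sr q h 1 k1 1 Ly)) * Kshuffle m k1 k2 0 (I - 1) w
      + (Ecoef1 m k2 I * (q powi (- (2 * (k1 - 1))) * h powi (-1) * Kstep sr q h m k2 (I - 1) Ly))
        * Kshuffle m k1 k2 1 (I - 1 - 1) w"
    unfolding Kcoupled_def first second by (simp add: algebra_simps)
  then show ?thesis
    unfolding coupling_y0 coupling_y1 Kcoupled_def by (simp add: algebra_simps)
qed

lemma Kcoupled_Nil:
  assumes "k1 = 0 \<or> k1 = 1"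
  shows "Kcoupled m k1 k2 I [] = Fcoef m k1 (k1 + k2) * Kword sr q h (m + 1) 1 I (k1 + k2) []"
proof -
  have tri: "neg_tri_power h 1 = 1" "neg_tri_power h (1 + m) = neg_tri_power h m * h powi (- m)"
    using neg_tri_power_succ[OF h_nonzero, of m] by (simp_all add: neg_tri_power_def add.commute)
  have h_mult: "h powi a * h powi b = h powi (a + b)" "h powi a * (h powi b * r) = h powi (a + b) * r" for a b r
    by (simp_all add: power_int_add h_nonzero)
  from assms show ?thesis
    by (elim disjE; cases "I = k1 + k2")
      (auto simp: Kcoupled_def Kshuffle_Nil Ecoef0_def Ecoef1_def Fcoef_def tri algebra_simps h_mult)
qed

lemma Kcoupled_eq_Kword:
  assumes "k1 = 0 \<or> k1 = 1"
  shows "Kcoupled m k1 k2 I w = Fcoef m k1 (k1 + k2) * Kword sr q h (m + 1) 1 I (k1 + k2) w"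
proof (induction w arbitrary: I)
  case Nil
  show ?case
    using Kcoupled_Nil[OF assms] .
next
  case (Cons c w)
  then show ?case
    by (cases c) (simp_all add: Kcoupled_Cons_Lx Kcoupled_Cons_Ly)
qed

end


section \<open>Contracting the matrix product\<close>

lemma sum_two_deltas:
  fixes x y :: "'a::semiring_0"
  assumes "finite S" "a \<in> S" "b \<in> S" "a \<noteq> b"
  shows "(\<Sum>l\<in>S. ((if l = a then x else 0) + (if l = b then y else 0)) * T l) = x * T a + y * T b"
proof -
  have "((if l = a then x else 0) + (if l = b then y else 0)) * T l
      = (if l = a then x * T a else 0) + (if l = b then y * T b else 0)" for l
    using assms(4) by simp
  with assms show ?thesis
    by (simp add: sum.distrib)
qed

lemma sum_nested_swap:
  fixes e :: "'b \<Rightarrow> 'a::comm_semiring_0"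
  shows "(\<Sum>a\<in>A. e a * (\<Sum>b\<in>B. r b * (\<Sum>x\<in>C. f x * V x b a)))
    = (\<Sum>x\<in>C. f x * (\<Sum>a\<in>A. e a * (\<Sum>b\<in>B. r b * V x b a)))"
proof -
  have "(\<Sum>a\<in>A. e a * (\<Sum>b\<in>B. r b * (\<Sum>x\<in>C. f x * V x b a)))
      = (\<Sum>a\<in>A. \<Sum>x\<in>C. \<Sum>b\<in>B. f x * (e a * (r b * V x b a)))"
    by (simp add: sum_distrib_left sum.swap[of _ B] mult.left_commute)
  also have "\<dots> = (\<Sum>x\<in>C. \<Sum>a\<in>A. \<Sum>b\<in>B. f x * (e a * (r b * V x b a)))"
    by (rule sum.swap)
  also have "\<dots> = (\<Sum>x\<in>C. f x * (\<Sum>a\<in>A. e a * (\<Sum>b\<in>B. r b * V x b a)))"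
    by (simp add: sum_distrib_left)
  finally show ?thesis .
qed

lemma block_div_le_1: "l \<in> {1..2 * N} \<Longrightarrow> (l - 1) div N \<le> (1::nat)"
proof -
  assume "l \<in> {1..2 * N}"
  then have "(l - 1) div N < 2"
    by (intro less_mult_imp_div_less) auto
  then show ?thesis
    by simp
qed

lemma sum_block_delta:
  fixes N :: nat
  assumes "0 < N" "l0 \<in> {1..2 * N}" "l2 \<in> {1..2 * N}"
  defines "L \<equiv> (l2 - 1) div N * N + (l0 - 1) mod N + 1"
  shows "(\<Sum>l\<in>{1..2 * N}. if (l0 - 1) mod N = (l - 1) mod N \<and> (l - 1) div N = (l2 - 1) div N then Z l else 0)
    = Z L"
proof -
  have "(l2 - 1) div N = 0 \<or> (l2 - 1) div N = 1" "(l0 - 1) mod N < N"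
    using block_div_le_1[OF assms(3)] \<open>0 < N\<close> by auto
  then have L_range: "L \<in> {1..2 * N}"
    by (auto simp: L_def)
  have block_iff: "((l0 - 1) mod N = (l - 1) mod N \<and> (l - 1) div N = (l2 - 1) div N) \<longleftrightarrow> l = L"
    if "1 \<le> l" for l
  proof
    assume "(l0 - 1) mod N = (l - 1) mod N \<and> (l - 1) div N = (l2 - 1) div N"
    then have "l - 1 = (l2 - 1) div N * N + (l0 - 1) mod N"
      using div_mult_mod_eq[of "l - 1" N] by simp
    with that show "l = L"
      by (simp add: L_def)
  qed (use \<open>(l0 - 1) mod N < N\<close> in \<open>simp add: L_def\<close>)
  have "(\<Sum>l\<in>{1..2 * N}. if (l0 - 1) mod N = (l - 1) mod N \<and> (l - 1) div N = (l2 - 1) div N then Z l else 0)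
      = (\<Sum>l\<in>{1..2 * N}. if l = L then Z l else 0)"
  proof (rule sum.cong[OF refl])
    fix l assume "l \<in> {1..2 * N}"
    then show "(if (l0 - 1) mod N = (l - 1) mod N \<and> (l - 1) div N = (l2 - 1) div N then Z l else 0)
        = (if l = L then Z l else 0)"
      by (simp only: block_iff atLeastAtMost_iff)
  qed
  also have "\<dots> = Z L"
    using L_range by simp
  finally show ?thesis .
qed

lemma Rmat_eq_diag: "l \<in> {1..2 * m + 2} \<Longrightarrow> Rmat h m l' l = (if l' = l then qpow h (2 * Dmat m l) else 0)"
  by (auto simp: Rmat_def)


context generic_q
begin

text \<open>The entries of \<open>K^(1/2)(q^j t) \<otimes> I\<close> and \<open>I \<otimes> K^(j)(q^(-1/2) t)\<close> as word functions; an index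
  \<open>l \<in> {1..2m+2}\<close> stands for the pair \<open>((l - 1) div (m + 1), (l - 1) mod (m + 1))\<close>.\<close>

definition K1word :: "nat \<Rightarrow> nat \<Rightarrow> nat \<Rightarrow> 'a vv" where
  "K1word m l0 l = (if (l0 - 1) mod (m + 1) = (l - 1) mod (m + 1)
     then Kword sr q h 1 (h powi int m) (int ((l - 1) div (m + 1))) (1 - int ((l0 - 1) div (m + 1)))
     else (\<lambda>_. 0))"

definition K2word :: "nat \<Rightarrow> nat \<Rightarrow> nat \<Rightarrow> 'a vv" where
  "K2word m l l2 = (if (l - 1) div (m + 1) = (l2 - 1) div (m + 1)
     then Kword sr q h (int m) (h powi (-1)) (int ((l2 - 1) mod (m + 1))) (int m - int ((l - 1) mod (m + 1)))
     else (\<lambda>_. 0))"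

lemma kron_Kmat_idm_eq_homog:
  assumes "l0 \<in> {1..2 * m + 2}" "l \<in> {1..2 * m + 2}"
  shows "kron q (m + 1) (m + 1) (\<lambda>a b. tsubst_scale (qpow h (of_nat m / 2)) (Kmat sr q h 1 a b)) idm l0 l
    = homog (K1word m l0 l)"
proof -
  have "(l0 - 1) div (m + 1) \<le> 1" "(l - 1) div (m + 1) \<le> 1"
    using block_div_le_1[of l0 "m + 1"] block_div_le_1[of l "m + 1"] assms by simp_all
  then have "tsubst_scale (qpow h (of_nat m / 2)) (Kmat sr q h 1 ((l0 - 1) div (m + 1) + 1) ((l - 1) div (m + 1) + 1))
      = homog (Kword sr q h 1 (h powi int m) (int ((l - 1) div (m + 1))) (1 - int ((l0 - 1) div (m + 1))))"
    by (simp add: Kmat_eq_homog_Kword qpow_half tsubst_scale_homog_Kword)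
  then show ?thesis
    by (simp add: kron_def idm_def K1word_def lsconst_eq_homog zero_eq_homog lsmul_homog vstar_unit_right)
qed

lemma kron_idm_Kmat_eq_homog:
  "kron q (m + 1) (m + 1) idm (\<lambda>a b. tsubst_scale (qpow h (-1/2)) (Kmat sr q h m a b)) l l2
    = homog (K2word m l l2)"
proof -
  have "tsubst_scale (qpow h (-1/2)) (Kmat sr q h m ((l - 1) mod (m + 1) + 1) ((l2 - 1) mod (m + 1) + 1))
      = homog (Kword sr q h (int m) (h powi (-1)) (int ((l2 - 1) mod (m + 1))) (int m - int ((l - 1) mod (m + 1))))"
    unfolding qpow_neg_half by (simp add: Kmat_eq_homog_Kword tsubst_scale_homog_Kword)
  then show ?thesis
    by (simp add: kron_def idm_def K2word_def lsconst_eq_homog zero_eq_homog lsmul_homog vstar_unit_left)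
qed

lemma product_FKR_eq_homog:
  assumes "l \<in> {1..2 * m + 2}"
  shows "mmul q (2 * m + 2)
      (mmul q (2 * m + 2)
        (constmat (Fmat sr q m))
        (kron q (m + 1) (m + 1) (\<lambda>a b. tsubst_scale (qpow h (of_nat m / 2)) (Kmat sr q h 1 a b)) idm))
      (constmat (Rmat h m)) r l
    = homog (\<lambda>w. qpow h (2 * Dmat m l) * (\<Sum>l0\<in>{1..2 * m + 2}. Fmat sr q m r l0 * K1word m l0 l w))"
proof -
  let ?FK = "\<lambda>l w. \<Sum>l0\<in>{1..2 * m + 2}. Fmat sr q m r l0 * K1word m l0 l w"
  have "mmul q (2 * m + 2) (constmat (Fmat sr q m))
      (kron q (m + 1) (m + 1) (\<lambda>a b. tsubst_scale (qpow h (of_nat m / 2)) (Kmat sr q h 1 a b)) idm) r l'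
      = homog (?FK l')" if "l' \<in> {1..2 * m + 2}" for l'
    by (intro mmul_constmat_left kron_Kmat_idm_eq_homog that)
  then have "mmul q (2 * m + 2) (mmul q (2 * m + 2) (constmat (Fmat sr q m))
      (kron q (m + 1) (m + 1) (\<lambda>a b. tsubst_scale (qpow h (of_nat m / 2)) (Kmat sr q h 1 a b)) idm))
      (constmat (Rmat h m)) r l = homog (\<lambda>w. \<Sum>l'\<in>{1..2 * m + 2}. Rmat h m l' l * ?FK l' w)"
    by (rule mmul_constmat_right)
  also have "\<dots> = homog (\<lambda>w. qpow h (2 * Dmat m l) * ?FK l w)"
  proof -
    have "(\<Sum>l'\<in>{1..2 * m + 2}. Rmat h m l' l * ?FK l' w)
        = (\<Sum>l'\<in>{1..2 * m + 2}. if l' = l then qpow h (2 * Dmat m l) * ?FK l w else 0)" for w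
      by (rule sum.cong) (use assms in \<open>auto simp: Rmat_eq_diag\<close>)
    also have "\<dots> w = qpow h (2 * Dmat m l) * ?FK l w" for w
      using assms by (simp only: sum.delta finite_atLeastAtMost if_True)
    finally show ?thesis
      by (simp only:)
  qed
  finally show ?thesis .
qed

lemma product_eq_homog:
  "mmul q (2 * m + 2)
      (mmul q (2 * m + 2)
        (mmul q (2 * m + 2)
          (mmul q (2 * m + 2)
            (constmat (Fmat sr q m))
            (kron q (m + 1) (m + 1) (\<lambda>a b. tsubst_scale (qpow h (of_nat m / 2)) (Kmat sr q h 1 a b)) idm))
          (constmat (Rmat h m)))
        (kron q (m + 1) (m + 1) idm (\<lambda>a b. tsubst_scale (qpow h (-1/2)) (Kmat sr q h m a b))))
      (constmat (Emat sr q m)) r c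
   = homog (\<lambda>w. \<Sum>l2\<in>{1..2 * m + 2}. Emat sr q m l2 c * (\<Sum>l\<in>{1..2 * m + 2}. qpow h (2 * Dmat m l)
       * (\<Sum>l0\<in>{1..2 * m + 2}. Fmat sr q m r l0 * vstar q (K1word m l0 l) (K2word m l l2) w)))"
proof -
  let ?FKR = "\<lambda>l w. qpow h (2 * Dmat m l) * (\<Sum>l0\<in>{1..2 * m + 2}. Fmat sr q m r l0 * K1word m l0 l w)"
  have "vstar q (?FKR l) (K2word m l l2) w = qpow h (2 * Dmat m l)
      * (\<Sum>l0\<in>{1..2 * m + 2}. Fmat sr q m r l0 * vstar q (K1word m l0 l) (K2word m l l2) w)" for l l2 w
    by (simp only: vstar_scale_left vstar_sum_left[OF finite_atLeastAtMost])
  moreover have "mmul q (2 * m + 2)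
      (mmul q (2 * m + 2)
        (mmul q (2 * m + 2)
          (mmul q (2 * m + 2)
            (constmat (Fmat sr q m))
            (kron q (m + 1) (m + 1) (\<lambda>a b. tsubst_scale (qpow h (of_nat m / 2)) (Kmat sr q h 1 a b)) idm))
          (constmat (Rmat h m)))
        (kron q (m + 1) (m + 1) idm (\<lambda>a b. tsubst_scale (qpow h (-1/2)) (Kmat sr q h m a b))))
      (constmat (Emat sr q m)) r c
    = homog (\<lambda>w. \<Sum>l2\<in>{1..2 * m + 2}. Emat sr q m l2 c
        * (\<Sum>l\<in>{1..2 * m + 2}. vstar q (?FKR l) (K2word m l l2) w))"
    by (intro mmul_constmat_right mmul_homog product_FKR_eq_homog kron_idm_Kmat_eq_homog)
  ultimately show ?thesis
    by (simp only:)
qed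

lemma sum_Rmat_vstar_K1word_K2word:
  assumes "l0 \<in> {1..2 * m + 2}" "l2 \<in> {1..2 * m + 2}"
  shows "(\<Sum>l\<in>{1..2 * m + 2}. qpow h (2 * Dmat m l) * vstar q (K1word m l0 l) (K2word m l l2) w)
    = h powi ((if (l2 - 1) div (m + 1) = 0 then 1 else -1) * (int m - 2 * int ((l0 - 1) mod (m + 1))))
      * Kshuffle (int m) (1 - int ((l0 - 1) div (m + 1))) (int m - int ((l0 - 1) mod (m + 1)))
          (int ((l2 - 1) div (m + 1))) (int ((l2 - 1) mod (m + 1))) w"
proof -
  define N where "N = m + 1"
  define L where "L = (l2 - 1) div N * N + (l0 - 1) mod N + 1"
  have N_pos: "0 < N"
    by (simp add: N_def)
  let ?Z = "\<lambda>l. qpow h (2 * Dmat m l) * Kshuffle (int m) (1 - int ((l0 - 1) div N)) (int m - int ((l - 1) mod N))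
      (int ((l - 1) div N)) (int ((l2 - 1) mod N)) w"
  have "qpow h (2 * Dmat m l) * vstar q (K1word m l0 l) (K2word m l l2) w
      = (if (l0 - 1) mod N = (l - 1) mod N \<and> (l - 1) div N = (l2 - 1) div N then ?Z l else 0)" for l
    by (simp add: K1word_def K2word_def Kshuffle_def N_def)
  then have "(\<Sum>l\<in>{1..2 * m + 2}. qpow h (2 * Dmat m l) * vstar q (K1word m l0 l) (K2word m l l2) w) = ?Z L"
    using sum_block_delta[of N l0 l2 ?Z] assms by (simp add: N_def L_def)
  moreover have "(L - 1) div N = (l2 - 1) div N" and L_mod: "(L - 1) mod N = (l0 - 1) mod N"
    using N_pos by (simp_all add: L_def)
  moreover have "qpow h (2 * Dmat m L)
      = h powi ((if (l2 - 1) div N = 0 then 1 else -1) * (int m - 2 * int ((l0 - 1) mod N)))"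
  proof -
    have "(l2 - 1) div N = 0 \<or> (l2 - 1) div N = 1"
      using block_div_le_1[of l2 N] assms by (auto simp: N_def)
    moreover have "(l0 - 1) mod N < N"
      using N_pos by simp
    ultimately have "L \<le> m + 1 \<longleftrightarrow> (l2 - 1) div N = 0"
      by (auto simp: L_def N_def)
    with L_mod show ?thesis
      unfolding Dmat_def N_def[symmetric] by (intro qpow_eq_powi) (auto simp: field_simps)
  qed
  ultimately show ?thesis
    by (simp add: N_def)
qed

lemma sum_Emat_mult:
  assumes "1 \<le> m" "c \<in> {1..m + 2}"
  shows "(\<Sum>l\<in>{1..2 * m + 2}. Emat sr q m l c * S l)
    = sr (qint q (int m + 2 - int c)) / sr (qint q (int m + 1)) * S c
    + sr (qint q (int c - 1)) / sr (qint q (int m + 1)) * S (c + m)"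
proof -
  have "Emat sr q m l c = (if l = c then sr (qint q (int m + 2 - int c)) / sr (qint q (int m + 1)) else 0)
      + (if l = c + m then sr (qint q (int c - 1)) / sr (qint q (int m + 1)) else 0)"
    if "l \<in> {1..2 * m + 2}" for l
    using assms that by (cases "c = m + 2"; cases "c = 1") (auto simp: Emat_def of_nat_diff)
  then have "(\<Sum>l\<in>{1..2 * m + 2}. Emat sr q m l c * S l)
      = (\<Sum>l\<in>{1..2 * m + 2}. ((if l = c then sr (qint q (int m + 2 - int c)) / sr (qint q (int m + 1)) else 0)
          + (if l = c + m then sr (qint q (int c - 1)) / sr (qint q (int m + 1)) else 0)) * S l)"
    by (intro sum.cong) simp_all
  also have "\<dots> = sr (qint q (int m + 2 - int c)) / sr (qint q (int m + 1)) * S c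
      + sr (qint q (int c - 1)) / sr (qint q (int m + 1)) * S (c + m)"
    by (rule sum_two_deltas) (use assms in auto)
  finally show ?thesis .
qed

lemma sum_Fmat_mult:
  assumes "1 \<le> m" "r \<in> {1..m + 2}"
  defines "D \<equiv> qint q (int m + 2 - int r) + qint q (int r - 1)"
  shows "(\<Sum>l\<in>{1..2 * m + 2}. Fmat sr q m r l * S l)
    = sr (qint q (int m + 2 - int r)) * sr (qint q (int m + 1)) / D * S r
    + sr (qint q (int r - 1)) * sr (qint q (int m + 1)) / D * S (r + m)"
proof -
  have "Fmat sr q m r l = (if l = r then sr (qint q (int m + 2 - int r)) * sr (qint q (int m + 1)) / D else 0)
      + (if l = r + m then sr (qint q (int r - 1)) * sr (qint q (int m + 1)) / D else 0)"
    if "l \<in> {1..2 * m + 2}" for l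
    using assms that
    by (cases "r = m + 2"; cases "r = 1") (auto simp: Fmat_def of_nat_diff Let_def algebra_simps)
  then have "(\<Sum>l\<in>{1..2 * m + 2}. Fmat sr q m r l * S l)
      = (\<Sum>l\<in>{1..2 * m + 2}. ((if l = r then sr (qint q (int m + 2 - int r)) * sr (qint q (int m + 1)) / D else 0)
          + (if l = r + m then sr (qint q (int r - 1)) * sr (qint q (int m + 1)) / D else 0)) * S l)"
    by (intro sum.cong) simp_all
  also have "\<dots> = sr (qint q (int m + 2 - int r)) * sr (qint q (int m + 1)) / D * S r
      + sr (qint q (int r - 1)) * sr (qint q (int m + 1)) / D * S (r + m)"
    by (rule sum_two_deltas) (use assms in auto)
  finally show ?thesis .
qed

lemma Fmat_denominator_nonzero:
  assumes "r \<in> {1..m + 2}"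
  shows "qint q (int m + 2 - int r) + qint q (int r - 1) \<noteq> 0"
proof -
  have "int (m + 2 - r) = int m + 2 - int r" "int (r - 1) = int r - 1"
    using assms by auto
  then show ?thesis
    using qint_add_qint_nonzero[of "m + 2 - r" "r - 1"] assms by simp
qed

lemma Emat_contraction:
  assumes "1 \<le> m" "l0 \<in> {1..2 * m + 2}" "c \<in> {1..m + 2}"
  shows "(\<Sum>l2\<in>{1..2 * m + 2}. Emat sr q m l2 c
      * (\<Sum>l\<in>{1..2 * m + 2}. qpow h (2 * Dmat m l) * vstar q (K1word m l0 l) (K2word m l l2) w))
    = Kcoupled (int m) (1 - int ((l0 - 1) div (m + 1))) (int m - int ((l0 - 1) mod (m + 1))) (int c - 1) w
      / sr (qint q (int m + 1))"
proof -
  let ?k1 = "1 - int ((l0 - 1) div (m + 1))" and ?k2 = "int m - int ((l0 - 1) mod (m + 1))"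
  let ?S = "\<lambda>l2. \<Sum>l\<in>{1..2 * m + 2}. qpow h (2 * Dmat m l) * vstar q (K1word m l0 l) (K2word m l l2) w"
  have c_range: "c \<in> {1..2 * m + 2}" "c + m \<in> {1..2 * m + 2}"
    using assms by auto
  have "sr (qint q (int m + 2 - int c)) * ?S c = Ecoef0 (int m) ?k2 (int c - 1) * Kshuffle (int m) ?k1 ?k2 0 (int c - 1) w"
  proof (cases "c = m + 2")
    case False
    with assms have "(c - 1) div (m + 1) = 0" "(c - 1) mod (m + 1) = c - 1"
      by auto
    with assms show ?thesis
      unfolding sum_Rmat_vstar_K1word_K2word[OF assms(2) c_range(1)]
      by (simp add: Ecoef0_def of_nat_diff algebra_simps)
  qed (simp add: Ecoef0_def)
  moreover have "sr (qint q (int c - 1)) * ?S (c + m) = Ecoef1 (int m) ?k2 (int c - 1) * Kshuffle (int m) ?k1 ?k2 1 (int c - 1 - 1) w"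
  proof (cases "c = 1")
    case False
    with assms have "m + 1 \<le> c + m - 1" "c + m - 1 - (m + 1) = c - 2" "c - 2 < m + 1"
      by auto
    then have "(c + m - 1) div (m + 1) = 1" "(c + m - 1) mod (m + 1) = c - 2"
      by (simp_all add: le_div_geq le_mod_geq)
    with assms False show ?thesis
      unfolding sum_Rmat_vstar_K1word_K2word[OF assms(2) c_range(2)]
      by (simp add: Ecoef1_def of_nat_diff algebra_simps)
  qed (simp add: Ecoef1_def)
  ultimately show ?thesis
    unfolding sum_Emat_mult[OF assms(1,3)]
    by (simp add: Kcoupled_def add_divide_distrib mult.commute mult.left_commute)
qed

lemma Kcoupled_F_column_r:
  assumes "r \<in> {1..m + 2}"
  shows "sr (qint q (int m + 2 - int r))
      * Kcoupled (int m) (1 - int ((r - 1) div (m + 1))) (int m - int ((r - 1) mod (m + 1))) I w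
    = sr (qint q (int m + 2 - int r)) * sr (qint q (int m + 2 - int r))
      * Kword sr q h (int m + 1) 1 I (int m + 2 - int r) w"
proof (cases "r = m + 2")
  case False
  with assms have "(r - 1) div (m + 1) = 0" "(r - 1) mod (m + 1) = r - 1"
    by auto
  with assms show ?thesis
    using Kcoupled_eq_Kword[of 1 "int m" "int m + 1 - int r" I w]
    by (simp add: Fcoef_def of_nat_diff algebra_simps)
qed simp

lemma Kcoupled_F_column_r_plus_m:
  assumes "r \<in> {1..m + 2}"
  shows "sr (qint q (int r - 1))
      * Kcoupled (int m) (1 - int ((r + m - 1) div (m + 1))) (int m - int ((r + m - 1) mod (m + 1))) I w
    = sr (qint q (int r - 1)) * sr (qint q (int r - 1)) * Kword sr q h (int m + 1) 1 I (int m + 2 - int r) w"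
proof (cases "r = 1")
  case False
  with assms have "m + 1 \<le> r + m - 1" "r + m - 1 - (m + 1) = r - 2" "r - 2 < m + 1"
    by auto
  then have "(r + m - 1) div (m + 1) = 1" "(r + m - 1) mod (m + 1) = r - 2"
    by (simp_all add: le_div_geq le_mod_geq)
  with assms False show ?thesis
    using Kcoupled_eq_Kword[of 0 "int m" "int m + 2 - int r" I w]
    by (simp add: Fcoef_def of_nat_diff algebra_simps)
qed simp

lemma Fmat_contraction:
  assumes "1 \<le> m" "r \<in> {1..m + 2}"
  shows "(\<Sum>l0\<in>{1..2 * m + 2}. Fmat sr q m r l0
      * (Kcoupled (int m) (1 - int ((l0 - 1) div (m + 1))) (int m - int ((l0 - 1) mod (m + 1))) I w
         / sr (qint q (int m + 1))))
    = Kword sr q h (int m + 1) 1 I (int m + 2 - int r) w"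
proof -
  let ?C = "\<lambda>l0. Kcoupled (int m) (1 - int ((l0 - 1) div (m + 1))) (int m - int ((l0 - 1) mod (m + 1))) I w"
  let ?s = "sr (qint q (int m + 1))" and ?D = "qint q (int m + 2 - int r) + qint q (int r - 1)"
  let ?a = "sr (qint q (int m + 2 - int r))" and ?b = "sr (qint q (int r - 1))"
  have cancel: "x * ?s / ?D * (y / ?s) = x * y / ?D" for x y
    using sr_qint_nonzero[of "int m + 1"] by simp
  have "(\<Sum>l0\<in>{1..2 * m + 2}. Fmat sr q m r l0 * (?C l0 / ?s)) = (?a * ?C r + ?b * ?C (r + m)) / ?D"
    unfolding sum_Fmat_mult[OF assms] cancel by (simp only: add_divide_distrib)
  also have "\<dots> = ?D * Kword sr q h (int m + 1) 1 I (int m + 2 - int r) w / ?D"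
    unfolding Kcoupled_F_column_r[OF assms(2)] Kcoupled_F_column_r_plus_m[OF assms(2)] sr_mult_sr
    by (simp add: algebra_simps)
  also have "\<dots> = Kword sr q h (int m + 1) 1 I (int m + 2 - int r) w"
    using Fmat_denominator_nonzero[OF assms(2)] by simp
  finally show ?thesis .
qed

lemma Kmat_Suc_eq_product:
  assumes "1 \<le> m" "r \<in> {1..m + 2}" "c \<in> {1..m + 2}"
  shows "Kmat sr q h (m + 1) r c =
    mmul q (2 * m + 2)
      (mmul q (2 * m + 2)
        (mmul q (2 * m + 2)
          (mmul q (2 * m + 2)
            (constmat (Fmat sr q m))
            (kron q (m + 1) (m + 1) (\<lambda>a b. tsubst_scale (qpow h (of_nat m / 2)) (Kmat sr q h 1 a b)) idm))
          (constmat (Rmat h m)))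
        (kron q (m + 1) (m + 1) idm (\<lambda>a b. tsubst_scale (qpow h (-1/2)) (Kmat sr q h m a b))))
      (constmat (Emat sr q m)) r c"
proof -
  have "Kmat sr q h (m + 1) r c = homog (Kword sr q h (int m + 1) 1 (int c - 1) (int m + 2 - int r))"
  proof -
    have idx: "int (m + 1) = int m + 1" "int m + 1 + 1 - int r = int m + 2 - int r"
      by simp_all
    show ?thesis
      by (rule Kmat_eq_homog_Kword[of r "m + 1" c, unfolded idx]) (use assms in auto)
  qed
  also have "\<dots> = homog (\<lambda>w. \<Sum>l0\<in>{1..2 * m + 2}. Fmat sr q m r l0
      * (Kcoupled (int m) (1 - int ((l0 - 1) div (m + 1))) (int m - int ((l0 - 1) mod (m + 1))) (int c - 1) w
         / sr (qint q (int m + 1))))"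
    by (rule arg_cong[where f = homog], rule ext, rule Fmat_contraction[OF assms(1,2), symmetric])
  also have "\<dots> = homog (\<lambda>w. \<Sum>l0\<in>{1..2 * m + 2}. Fmat sr q m r l0
      * (\<Sum>l2\<in>{1..2 * m + 2}. Emat sr q m l2 c
         * (\<Sum>l\<in>{1..2 * m + 2}. qpow h (2 * Dmat m l) * vstar q (K1word m l0 l) (K2word m l l2) w)))"
    by (rule arg_cong[where f = homog], rule ext, rule sum.cong[OF refl])
      (simp only: Emat_contraction[OF assms(1) _ assms(3)])
  also have "\<dots> = homog (\<lambda>w. \<Sum>l2\<in>{1..2 * m + 2}. Emat sr q m l2 c * (\<Sum>l\<in>{1..2 * m + 2}. qpow h (2 * Dmat m l)
       * (\<Sum>l0\<in>{1..2 * m + 2}. Fmat sr q m r l0 * vstar q (K1word m l0 l) (K2word m l l2) w)))"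
    by (rule arg_cong[where f = homog], rule ext, rule sum_nested_swap[symmetric])
  finally show ?thesis
    unfolding product_eq_homog .
qed

end

theorem proposition6p9:
  fixes q h :: "'a::field_char_0" and sr :: "'a \<Rightarrow> 'a" and m :: nat
  assumes "q \<noteq> 0"
    and "\<forall>n::nat. n > 0 \<longrightarrow> q ^ n \<noteq> 1"
    and "h * h = q"
    and "\<forall>z. sr z * sr z = z"
    and "m \<ge> 1"
  shows "\<forall>r\<in>{1..m+2}. \<forall>c\<in>{1..m+2}.
    Kmat sr q h (m + 1) r c =
    mmul q (2 * m + 2)
      (mmul q (2 * m + 2)
        (mmul q (2 * m + 2)
          (mmul q (2 * m + 2)
            (constmat (Fmat sr q m))
            (kron q (m + 1) (m + 1) (\<lambda>a b. tsubst_scale (qpow h (of_nat m / 2)) (Kmat sr q h 1 a b)) idm))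
          (constmat (Rmat h m)))
        (kron q (m + 1) (m + 1) idm (\<lambda>a b. tsubst_scale (qpow h (-1/2)) (Kmat sr q h m a b))))
      (constmat (Emat sr q m)) r c"
proof -
  interpret generic_q sr q h
    by unfold_locales (use assms in auto)
  show ?thesis
    using Kmat_Suc_eq_product[OF assms(5)] by blast
qed

end
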